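(* Let $(X,d)$ be a compact geodesic metric space and let $f:X\to\mathbb{R}$ be Lipschitz. Then for every $(x,t)\in X\times(0,\infty)$ one has $|DQ_tf|(x)=\frac{D^+(x,t)}{t}$. Moreover, for every $x\in X$, \[ \frac{d}{dt}Q_tf(x)+\frac12|DQ_tf|^2(x)=0 \] for every $t\in(0,\infty)$ outside an at most countable set.
   Context: Hopf–Lax semigroup: for $t>0$, $Q_tf(x):=\min_{y\in X}F(t,x,y)$ with $F(t,x,y):=f(y)+\frac{d^2(x,y)}{2t}$, and $Q_0f:=f$. For $t>0$, $D^+(x,t):=\max d(x,y)$ and $D^-(x,t):=\min d(x,y)$, where $y$ ranges over the minimizers of $F(t,x,\cdot)$. Slope: $|Dg|(x):=\limsup_{y\to x}\frac{|g(y)-g(x)|}{d(y,x)}$. A metric space is geodesic if any two points $x,y$ are joined by a curve $\gamma:[0,1]\to X$ with $\gamma_0=x$, $\gamma_1=y$ and $d(\gamma_s,\gamma_t)=|t-s|d(x,y)$ for all $s,t$. *)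

theory Defs
  imports "HOL-Analysis.Analysis"
begin

text \<open>Geodesic metric space (the whole type is the space X).\<close>
definition geodesic_space :: "'a::metric_space itself \<Rightarrow> bool" where
  "geodesic_space _ \<longleftrightarrow>
     (\<forall>x y::'a. \<exists>\<gamma>::real \<Rightarrow> 'a. \<gamma> 0 = x \<and> \<gamma> 1 = y \<and>
        (\<forall>s\<in>{0..1}. \<forall>t\<in>{0..1}. dist (\<gamma> s) (\<gamma> t) = \<bar>t - s\<bar> * dist x y))"

text \<open>Hopf--Lax semigroup; for t>0 the minimum is attained on a compact space,
  so it coincides with the infimum.\<close>
definition hopf_lax :: "real \<Rightarrow> ('a::metric_space \<Rightarrow> real) \<Rightarrow> 'a \<Rightarrow> real" where
  "hopf_lax t f x = (if t = 0 then f x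
      else (INF y. f y + (dist x y)\<^sup>2 / (2 * t)))"

definition hl_minimizers :: "('a::metric_space \<Rightarrow> real) \<Rightarrow> real \<Rightarrow> 'a \<Rightarrow> 'a set" where
  "hl_minimizers f t x = {y. f y + (dist x y)\<^sup>2 / (2 * t) = hopf_lax t f x}"

definition Dplus :: "('a::metric_space \<Rightarrow> real) \<Rightarrow> 'a \<Rightarrow> real \<Rightarrow> real" where
  "Dplus f x t = Sup (dist x ` hl_minimizers f t x)"

definition Dminus :: "('a::metric_space \<Rightarrow> real) \<Rightarrow> 'a \<Rightarrow> real \<Rightarrow> real" where
  "Dminus f x t = Inf (dist x ` hl_minimizers f t x)"

text \<open>Slope (local Lipschitz constant), valued in extended reals;
  by convention 0 at isolated points.\<close>
definition slope :: "('a::metric_space \<Rightarrow> real) \<Rightarrow> 'a \<Rightarrow> ereal" where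
  "slope g x = (if at x = bot then 0
     else Limsup (at x) (\<lambda>y. ereal (\<bar>g y - g x\<bar> / dist y x)))"

end

theory Submission
  imports Defs
begin

(* Write F(t,x,y) = f y + d(x,y)^2/(2t) and M(t,x) for the set of
   minimizers of F(t,x,_).

   First, compactness makes M(t,x) nonempty and compact, so D+(x,t) is attained.
   Slope: moving from x along a geodesic towards a farthest minimizer y, the cost
   F(t,_,y) drops at rate D+(x,t)/t, which bounds |DQ_t f|(x) from below.  For the
   upper bound, minimizers of points z near x stay within distance D+(x,t)+eps of z
   (upper semicontinuity, obtained from closedness of the graph of M), and comparing
   Q_t f at x and z through each other's minimizers gives |DQ_t f|(x) <= D+(x,t)/t.
   Time derivative: for s,t > 0 the difference quotient of s |-> Q_s f x lies between
   -d(x,y_t)^2/(2st) and -d(x,y_s)^2/(2st) for minimizers y_t, y_s.  Distances of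
   minimizers grow with time, so D+(x,_) is monotone, hence continuous off a countable
   set, and at its continuity points both bounds tend to -D+(x,t)^2/(2t^2). *)

lemma Limsup_filter_mono:
  assumes "F \<le> G"
  shows "Limsup F g \<le> Limsup G g"
  unfolding Limsup_def using assms by (intro INF_superset_mono) (auto intro: filter_leD)

lemma linear_speed_curve_filterlim_at:
  fixes \<gamma> :: "real \<Rightarrow> 'a::metric_space"
  assumes speed: "\<And>s. 0 \<le> s \<Longrightarrow> s \<le> 1 \<Longrightarrow> dist (\<gamma> s) x = s * d" and d: "d > 0"
  shows "filterlim \<gamma> (at x) (at_right 0)"
proof (rule filterlim_atI)
  have near0: "eventually (\<lambda>s. s \<in> {0<..<1}) (at_right (0::real))"
    by (rule eventually_at_right_real) simp
  have "((\<lambda>s. s * d) \<longlongrightarrow> 0 * d) (at_right 0)"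
    by (intro tendsto_intros)
  then have "((\<lambda>s. s * d) \<longlongrightarrow> 0) (at_right 0)" by simp
  then have "((\<lambda>s. dist (\<gamma> s) x) \<longlongrightarrow> 0) (at_right 0)"
    by (rule Lim_transform_eventually) (rule eventually_mono[OF near0], simp add: speed)
  then show "(\<gamma> \<longlongrightarrow> x) (at_right 0)" by (rule tendsto_dist_iff[THEN iffD2])
  show "eventually (\<lambda>s. \<gamma> s \<noteq> x) (at_right 0)"
  proof (rule eventually_mono[OF near0])
    fix s :: real assume "s \<in> {0<..<1}"
    then have "dist (\<gamma> s) x > 0" using speed d by simp
    then show "\<gamma> s \<noteq> x" by auto
  qed
qed

lemma geodesic_curve:
  fixes x y :: "'a::metric_space"
  assumes "geodesic_space TYPE('a)"
  obtains \<gamma> :: "real \<Rightarrow> 'a" where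
    "\<And>s. 0 \<le> s \<Longrightarrow> s \<le> 1 \<Longrightarrow> dist (\<gamma> s) x = s * dist x y"
    "\<And>s. 0 \<le> s \<Longrightarrow> s \<le> 1 \<Longrightarrow> dist (\<gamma> s) y = (1 - s) * dist x y"
proof -
  obtain \<gamma> :: "real \<Rightarrow> 'a" where "\<gamma> 0 = x" "\<gamma> 1 = y"
    and geo: "\<forall>a\<in>{0..1}. \<forall>b\<in>{0..1}. dist (\<gamma> a) (\<gamma> b) = \<bar>b - a\<bar> * dist x y"
    using assms unfolding geodesic_space_def by blast
  then show thesis
    using geo[rule_format, of 0] geo[rule_format, of _ 1]
    by (intro that[of \<gamma>]) (auto simp: dist_commute)
qed

lemma quadratic_cost_increment:
  fixes t r a b p q0 q1 :: real
  assumes t: "t > 0" and a: "0 \<le> a" "a \<le> b + r"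
    and q1: "q1 \<le> p + a\<^sup>2 / (2 * t)" and q0: "q0 = p + b\<^sup>2 / (2 * t)"
  shows "q1 - q0 \<le> r * (b + r / 2) / t"
proof -
  have "q1 - q0 \<le> (a\<^sup>2 - b\<^sup>2) / (2 * t)"
    using q0 q1 by (simp add: diff_divide_distrib)
  also have "\<dots> \<le> ((b + r)\<^sup>2 - b\<^sup>2) / (2 * t)"
    using a t by (intro divide_right_mono diff_right_mono power_mono) auto
  also have "\<dots> = r * (b + r / 2) / t"
    using t by (simp add: field_simps power2_eq_square)
  finally show ?thesis .
qed

lemma quadratic_cost_decrease:
  fixes t s D p q0 q1 :: real
  assumes t: "t > 0"
    and q1: "q1 \<le> p + ((1 - s) * D)\<^sup>2 / (2 * t)" and q0: "q0 = p + D\<^sup>2 / (2 * t)"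
  shows "s * D * (D * (2 - s) / (2 * t)) \<le> q0 - q1"
proof -
  have "s * D * (D * (2 - s) / (2 * t)) = D\<^sup>2 / (2 * t) - ((1 - s) * D)\<^sup>2 / (2 * t)"
    using t by (simp add: field_simps power2_eq_square)
  then show ?thesis using q0 q1 by linarith
qed

lemma hopf_lax_minimizer:
  "y \<in> hl_minimizers f t x \<Longrightarrow> hopf_lax t f x = f y + (dist x y)\<^sup>2 / (2 * t)"
  by (simp add: hl_minimizers_def)

context
  fixes f :: "'a::metric_space \<Rightarrow> real"
  assumes compact_space: "compact (UNIV :: 'a set)" and f_cont: "continuous_on UNIV f"
begin

lemma hopf_lax_cost_bdd_below:
  assumes t: "t > 0"
  shows "bdd_below (range (\<lambda>y. f y + (dist x y)\<^sup>2 / (2 * t)))"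
proof -
  have "bdd_below (range f)"
    using compact_continuous_image[OF f_cont compact_space]
    by (intro bounded_imp_bdd_below compact_imp_bounded)
  then obtain m where m: "\<And>y. m \<le> f y" by (auto simp: bdd_below_def)
  have "m \<le> f y + (dist x y)\<^sup>2 / (2 * t)" for y
    using m[of y] t by (simp add: add_increasing2)
  then show ?thesis by (auto simp: bdd_below_def)
qed

lemma hopf_lax_le: "t > 0 \<Longrightarrow> hopf_lax t f x \<le> f y + (dist x y)\<^sup>2 / (2 * t)"
  unfolding hopf_lax_def using hopf_lax_cost_bdd_below[of t x] by (auto intro: cINF_lower)

lemma hopf_lax_greatest:
  "t > 0 \<Longrightarrow> (\<And>y. c \<le> f y + (dist x y)\<^sup>2 / (2 * t)) \<Longrightarrow> c \<le> hopf_lax t f x"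
  unfolding hopf_lax_def by (auto intro: cINF_greatest)

lemma hl_minimizers_iff:
  assumes t: "t > 0"
  shows "y \<in> hl_minimizers f t x \<longleftrightarrow>
    (\<forall>z. f y + (dist x y)\<^sup>2 / (2 * t) \<le> f z + (dist x z)\<^sup>2 / (2 * t))"
proof
  assume "y \<in> hl_minimizers f t x"
  then show "\<forall>z. f y + (dist x y)\<^sup>2 / (2 * t) \<le> f z + (dist x z)\<^sup>2 / (2 * t)"
    using hopf_lax_le[OF t] hopf_lax_minimizer by metis
next
  assume "\<forall>z. f y + (dist x y)\<^sup>2 / (2 * t) \<le> f z + (dist x z)\<^sup>2 / (2 * t)"
  then have "f y + (dist x y)\<^sup>2 / (2 * t) \<le> hopf_lax t f x"
    by (intro hopf_lax_greatest[OF t]) auto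
  then show "y \<in> hl_minimizers f t x"
    using hopf_lax_le[OF t, of x y] by (simp add: hl_minimizers_def)
qed

lemma hl_minimizers_nonempty:
  assumes t: "t > 0"
  shows "\<exists>y. y \<in> hl_minimizers f t x"
proof -
  have "continuous_on UNIV (\<lambda>y. f y + (dist x y)\<^sup>2 / (2 * t))"
    by (intro continuous_intros f_cont) (use t in simp)
  from continuous_attains_inf[OF compact_space _ this] show ?thesis
    unfolding hl_minimizers_iff[OF t] by auto
qed

lemma hl_minimizers_compact:
  assumes t: "t > 0"
  shows "compact (hl_minimizers f t x)"
proof -
  have "closed {y. f y + (dist x y)\<^sup>2 / (2 * t) = hopf_lax t f x}"
    by (intro closed_Collect_eq continuous_intros f_cont) (use t in simp)
  then show ?thesis
    using compact_Int_closed[OF compact_space] by (simp add: hl_minimizers_def)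
qed

lemma Dplus_attained:
  assumes t: "t > 0"
  obtains y where "y \<in> hl_minimizers f t x" "dist x y = Dplus f x t"
    "\<And>z. z \<in> hl_minimizers f t x \<Longrightarrow> dist x z \<le> Dplus f x t"
proof -
  have "hl_minimizers f t x \<noteq> {}" using hl_minimizers_nonempty[OF t] by auto
  from continuous_attains_sup[OF hl_minimizers_compact[OF t] this continuous_on_dist]
  obtain y where y: "y \<in> hl_minimizers f t x" "\<forall>z\<in>hl_minimizers f t x. dist x z \<le> dist x y"
    using continuous_on_id continuous_on_const by blast
  moreover have "Dplus f x t = dist x y"
    unfolding Dplus_def using y by (intro cSup_eq_maximum) auto
  ultimately show thesis using that by simp
qed

lemma Dplus_max:
  assumes "t > 0" "y \<in> hl_minimizers f t x"
  shows "dist x y \<le> Dplus f x t"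
  using Dplus_attained[OF assms(1), of x] assms(2) by blast

text \<open>Minimizers move away from x as time increases: comparing the two optimality
  inequalities gives (d_u^2 - d_s^2)(1/(2u) - 1/(2s)) \<le> 0 for u < s.\<close>
lemma minimizer_dist_mono:
  assumes u: "0 < u" and us: "u < s"
    and y: "y \<in> hl_minimizers f u x" and z: "z \<in> hl_minimizers f s x"
  shows "dist x y \<le> dist x z"
proof -
  have s: "s > 0" using u us by simp
  define c where "c = 1 / (2 * u) - 1 / (2 * s)"
  have c_pos: "c > 0"
    unfolding c_def using u us by (simp add: divide_strict_left_mono)
  have "(dist x y)\<^sup>2 / (2 * u) - (dist x y)\<^sup>2 / (2 * s) \<le>
        (dist x z)\<^sup>2 / (2 * u) - (dist x z)\<^sup>2 / (2 * s)"
    using hopf_lax_le[OF s, of x y] hopf_lax_le[OF u, of x z]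
      hopf_lax_minimizer[OF y] hopf_lax_minimizer[OF z] by linarith
  then have "(dist x y)\<^sup>2 * c \<le> (dist x z)\<^sup>2 * c"
    unfolding c_def by (simp add: right_diff_distrib)
  then have "(dist x y)\<^sup>2 \<le> (dist x z)\<^sup>2" using c_pos by simp
  then show ?thesis by (rule power2_le_imp_le) simp
qed

lemma Dplus_mono: "mono_on {0<..} (\<lambda>s. Dplus f x s)"
proof (rule mono_onI)
  fix u s :: real assume us: "u \<in> {0<..}" "s \<in> {0<..}" "u \<le> s"
  obtain y where y: "y \<in> hl_minimizers f u x" "dist x y = Dplus f x u"
    using Dplus_attained[of u x] us by auto
  obtain z where z: "z \<in> hl_minimizers f s x" "dist x z = Dplus f x s"
    using Dplus_attained[of s x] us by auto
  show "Dplus f x u \<le> Dplus f x s"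
    using minimizer_dist_mono[OF _ _ y(1) z(1)] y z us by (cases "u = s") auto
qed

lemma hl_minimizers_limit:
  assumes t: "t > 0" and Z: "Z \<longlonglongrightarrow> x" and W: "W \<longlonglongrightarrow> w"
    and min: "\<And>n. W n \<in> hl_minimizers f t (Z n)"
  shows "w \<in> hl_minimizers f t x"
  unfolding hl_minimizers_iff[OF t]
proof
  fix v
  have f_at: "isCont f p" for p using f_cont by (simp add: continuous_on_eq_continuous_at)
  have "(\<lambda>n. f (W n) + (dist (Z n) (W n))\<^sup>2 / (2 * t)) \<longlonglongrightarrow> f w + (dist x w)\<^sup>2 / (2 * t)"
    by (intro tendsto_intros isCont_tendsto_compose[OF f_at W] Z W) (use t in simp)
  moreover have "(\<lambda>n. f v + (dist (Z n) v)\<^sup>2 / (2 * t)) \<longlonglongrightarrow> f v + (dist x v)\<^sup>2 / (2 * t)"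
    by (intro tendsto_intros Z) (use t in simp)
  moreover have "f (W n) + (dist (Z n) (W n))\<^sup>2 / (2 * t) \<le> f v + (dist (Z n) v)\<^sup>2 / (2 * t)" for n
    using min[of n] hl_minimizers_iff[OF t] by blast
  ultimately show "f w + (dist x w)\<^sup>2 / (2 * t) \<le> f v + (dist x v)\<^sup>2 / (2 * t)"
    by (intro LIMSEQ_le) auto
qed

lemma minimizers_eventually_close:
  assumes t: "t > 0" and eta: "\<eta> > 0"
  shows "eventually (\<lambda>z. \<forall>w\<in>hl_minimizers f t z. dist z w \<le> Dplus f x t + \<eta>) (nhds x)"
proof (rule ccontr)
  assume "\<not> ?thesis"
  then have "\<forall>n. \<exists>z w. dist z x < inverse (real (Suc n)) \<and> w \<in> hl_minimizers f t z \<and>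
      Dplus f x t + \<eta> < dist z w"
    unfolding eventually_nhds_metric by (meson not_le inverse_positive_iff_positive of_nat_0_less_iff zero_less_Suc)
  then obtain Z W where Z: "\<And>n. dist (Z n) x < inverse (real (Suc n))"
    and W: "\<And>n. W n \<in> hl_minimizers f t (Z n)" and far: "\<And>n. Dplus f x t + \<eta> < dist (Z n) (W n)"
    by metis
  have "(\<lambda>n. dist (Z n) x) \<longlonglongrightarrow> 0"
    by (rule tendsto_sandwich[OF _ _ tendsto_const LIMSEQ_inverse_real_of_nat])
       (simp_all add: less_imp_le[OF Z] del: of_nat_Suc)
  then have "Z \<longlonglongrightarrow> x" by (rule tendsto_dist_iff[THEN iffD2])
  obtain l r where r: "strict_mono r" and Wr: "(W \<circ> r) \<longlonglongrightarrow> l"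
    using compact_imp_seq_compact[OF compact_space] unfolding seq_compact_def by blast
  have Zr: "(Z \<circ> r) \<longlonglongrightarrow> x" using LIMSEQ_subseq_LIMSEQ[OF \<open>Z \<longlonglongrightarrow> x\<close> r] .
  have "l \<in> hl_minimizers f t x"
    using hl_minimizers_limit[OF t Zr Wr] W by simp
  then have "dist x l \<le> Dplus f x t" by (rule Dplus_max[OF t])
  moreover have "Dplus f x t + \<eta> \<le> dist x l"
    by (intro tendsto_le[OF trivial_limit_sequentially tendsto_dist[OF Zr Wr] tendsto_const])
       (simp add: less_imp_le[OF far])
  ultimately show False using eta by linarith
qed

text \<open>Slope lower bound: in a geodesic space, the value decreases at rate at least D+/t
  along a geodesic from x to a farthest minimizer.  In particular x is not isolated.\<close>
lemma slope_lower_bound: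
  assumes t: "t > 0" and geo: "geodesic_space TYPE('a)" and D_pos: "Dplus f x t > 0"
  shows "at x \<noteq> bot \<and> ereal (Dplus f x t / t) \<le>
    Limsup (at x) (\<lambda>z. ereal (\<bar>hopf_lax t f z - hopf_lax t f x\<bar> / dist z x))"
    (is "_ \<and> _ \<le> Limsup _ ?g")
proof -
  define D where "D = Dplus f x t"
  obtain y where y: "y \<in> hl_minimizers f t x" "dist x y = D"
    using Dplus_attained[OF t, of x] unfolding D_def by blast
  obtain \<gamma> where \<gamma>x: "\<And>s. 0 \<le> s \<Longrightarrow> s \<le> 1 \<Longrightarrow> dist (\<gamma> s) x = s * D"
    and \<gamma>y: "\<And>s. 0 \<le> s \<Longrightarrow> s \<le> 1 \<Longrightarrow> dist (\<gamma> s) y = (1 - s) * D"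
    using geodesic_curve[OF geo] y(2) by metis
  have D: "D > 0" using D_pos by (simp add: D_def)
  have near0: "eventually (\<lambda>s. s \<in> {0<..<1}) (at_right (0::real))"
    by (rule eventually_at_right_real) simp
  have lim: "filterlim \<gamma> (at x) (at_right 0)"
    by (rule linear_speed_curve_filterlim_at[OF \<gamma>x D])
  have "at x \<noteq> bot"
    using lim filtermap_bot_iff[of \<gamma>] by (auto simp: filterlim_def bot_unique)
  have rate: "ereal (D * (2 - s) / (2 * t)) \<le> ?g (\<gamma> s)" if s: "s \<in> {0<..<1}" for s
  proof -
    have "s * D * (D * (2 - s) / (2 * t)) \<le> hopf_lax t f x - hopf_lax t f (\<gamma> s)"
      using hopf_lax_le[OF t, of "\<gamma> s" y] hopf_lax_minimizer[OF y(1)] \<gamma>y[of s] s y(2)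
      by (intro quadratic_cost_decrease[OF t]) (auto simp: dist_commute)
    then show ?thesis
      using \<gamma>x[of s] s D by (simp add: pos_le_divide_eq mult.commute)
  qed
  have rate_lim: "((\<lambda>s. ereal (D * (2 - s) / (2 * t))) \<longlongrightarrow> ereal (D * (2 - 0) / (2 * t))) (at_right 0)"
    by (intro tendsto_intros) (use t in simp)
  have "ereal (D / t) = Limsup (at_right (0::real)) (\<lambda>s. ereal (D * (2 - s) / (2 * t)))"
    using lim_imp_Limsup[OF trivial_limit_at_right_real rate_lim] t by simp
  also have "\<dots> \<le> Limsup (at_right 0) (\<lambda>s. ?g (\<gamma> s))"
    by (rule Limsup_mono[OF eventually_mono[OF near0 rate]])
  also have "\<dots> \<le> Limsup (filtermap \<gamma> (at_right 0)) ?g" by (rule Limsup_filtermap_ge)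
  also have "\<dots> \<le> Limsup (at x) ?g"
    using lim unfolding filterlim_def by (rule Limsup_filter_mono)
  finally show ?thesis using \<open>at x \<noteq> bot\<close> by (simp add: D_def)
qed

text \<open>Test
  Q_t f z with a farthest minimizer y of x, and Q_t f x with a minimizer w of z.\<close>
lemma hopf_lax_oscillation:
  assumes t: "t > 0" and near: "dist z x < t * e"
    and close: "\<forall>w\<in>hl_minimizers f t z. dist z w \<le> Dplus f x t + t * e / 2"
  shows "\<bar>hopf_lax t f z - hopf_lax t f x\<bar> \<le> dist z x * (Dplus f x t / t + e)"
proof -
  define D where "D = Dplus f x t"
  define Q where "Q = hopf_lax t f"
  define r where "r = dist z x"
  have r_bounds: "0 \<le> r" "r < t * e" using near by (simp_all add: r_def)
  obtain y where y: "y \<in> hl_minimizers f t x" "dist x y = D"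
    using Dplus_attained[OF t, of x] unfolding D_def by blast
  obtain w where w: "w \<in> hl_minimizers f t z"
    using hl_minimizers_nonempty[OF t] by blast
  have Qx: "Q x = f y + D\<^sup>2 / (2 * t)"
    using hopf_lax_minimizer[OF y(1)] y(2) by (simp add: Q_def)
  have Qz: "Q z = f w + (dist z w)\<^sup>2 / (2 * t)"
    using hopf_lax_minimizer[OF w] by (simp add: Q_def)
  have gain: "r * (b + r / 2) / t \<le> r * (D / t + e)" if "b + r / 2 \<le> D + t * e" for b
  proof -
    have "r * (b + r / 2) / t \<le> r * (D + t * e) / t"
      using that t r_bounds by (intro divide_right_mono mult_left_mono) auto
    also have "\<dots> = r * (D / t + e)" using t by (simp add: field_simps)
    finally show ?thesis .
  qed
  have "Q z - Q x \<le> r * (D + r / 2) / t"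
    using dist_triangle[of z y x] y(2) hopf_lax_le[OF t, of z y] Qx
    by (intro quadratic_cost_increment[OF t]) (auto simp: Q_def r_def dist_commute)
  also have "\<dots> \<le> r * (D / t + e)"
    using r_bounds by (intro gain) linarith
  finally have up: "Q z - Q x \<le> r * (D / t + e)" .
  have "Q x - Q z \<le> r * (dist z w + r / 2) / t"
    using dist_triangle[of x w z] hopf_lax_le[OF t, of x w] Qz
    by (intro quadratic_cost_increment[OF t]) (auto simp: Q_def r_def dist_commute)
  also have "\<dots> \<le> r * (D / t + e)"
    using r_bounds close w by (intro gain) (auto simp: D_def)
  finally have down: "Q x - Q z \<le> r * (D / t + e)" .
  show ?thesis using up down by (simp add: Q_def D_def r_def)
qed

lemma slope_upper_bound:
  assumes t: "t > 0"
  shows "Limsup (at x) (\<lambda>z. ereal (\<bar>hopf_lax t f z - hopf_lax t f x\<bar> / dist z x))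
    \<le> ereal (Dplus f x t / t)"
proof (rule ereal_le_epsilon2)
  fix e :: real assume e: "e > 0"
  have close: "eventually (\<lambda>z. \<forall>w\<in>hl_minimizers f t z. dist z w \<le> Dplus f x t + t * e / 2) (nhds x)"
    using minimizers_eventually_close[OF t, of "t * e / 2" x] t e by simp
  have near: "eventually (\<lambda>z. dist z x < t * e) (nhds x)"
    unfolding eventually_nhds_metric using t e by (intro exI[of _ "t * e"]) simp
  have "eventually (\<lambda>z. \<bar>hopf_lax t f z - hopf_lax t f x\<bar> / dist z x \<le> Dplus f x t / t + e) (at x)"
    unfolding eventually_at_filter
  proof (rule eventually_mono[OF eventually_conj[OF close near]], intro impI)
    fix z assume z: "(\<forall>w\<in>hl_minimizers f t z. dist z w \<le> Dplus f x t + t * e / 2) \<and> dist z x < t * e"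
      and "z \<noteq> x"
    then show "\<bar>hopf_lax t f z - hopf_lax t f x\<bar> / dist z x \<le> Dplus f x t / t + e"
      using hopf_lax_oscillation[OF t] by (simp add: pos_divide_le_eq mult.commute)
  qed
  then have "Limsup (at x) (\<lambda>z. ereal (\<bar>hopf_lax t f z - hopf_lax t f x\<bar> / dist z x))
      \<le> ereal (Dplus f x t / t + e)"
    by (intro Limsup_bounded) (auto elim: eventually_mono)
  then show "Limsup (at x) (\<lambda>z. ereal (\<bar>hopf_lax t f z - hopf_lax t f x\<bar> / dist z x))
      \<le> ereal (Dplus f x t / t) + ereal e"
    by simp
qed

lemma slope_hopf_lax:
  assumes t: "t > 0" and geo: "geodesic_space TYPE('a)"
  shows "slope (hopf_lax t f) x = ereal (Dplus f x t / t)"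
proof -
  define g where "g = (\<lambda>z. ereal (\<bar>hopf_lax t f z - hopf_lax t f x\<bar> / dist z x))"
  obtain y where "dist x y = Dplus f x t"
    using Dplus_attained[OF t, of x] by blast
  then have D_nonneg: "Dplus f x t \<ge> 0" by (metis zero_le_dist)
  show ?thesis
  proof (cases "at x = bot")
    case True
    then have "Dplus f x t = 0" using slope_lower_bound[OF t geo] D_nonneg by force
    then show ?thesis using True by (simp add: slope_def)
  next
    case False
    have "ereal (Dplus f x t / t) \<le> Limsup (at x) g"
    proof (cases "Dplus f x t > 0")
      case True then show ?thesis using slope_lower_bound[OF t geo True] by (simp add: g_def)
    next
      case False
      then have "Dplus f x t = 0" using D_nonneg by simp
      then show ?thesis using \<open>at x \<noteq> bot\<close> by (intro le_Limsup) (auto simp: g_def)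
    qed
    then have "Limsup (at x) g = ereal (Dplus f x t / t)"
      using slope_upper_bound[OF t] by (simp add: g_def antisym)
    then show ?thesis using False by (simp add: slope_def g_def)
  qed
qed

text \<open>Difference quotients in time are squeezed between -d(x,y_t)^2/(2st) and
  -d(x,y_s)^2/(2st), by testing Q_s f x with y_t and Q_t f x with y_s.\<close>
lemma hopf_lax_time_quotient_bounds:
  assumes s: "s > 0" and t: "t > 0" and st: "s \<noteq> t"
    and yt: "yt \<in> hl_minimizers f t x" and ys: "ys \<in> hl_minimizers f s x"
  defines "P \<equiv> (hopf_lax s f x - hopf_lax t f x) / (s - t)"
    and "A \<equiv> - (dist x yt)\<^sup>2 / (2 * s * t)" and "B \<equiv> - (dist x ys)\<^sup>2 / (2 * s * t)"
  shows "min A B \<le> P \<and> P \<le> max A B"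
proof -
  have quad: "d / (2 * s) - d / (2 * t) = (- d / (2 * s * t)) * (s - t)" for d :: real
    using s t by (simp add: field_simps)
  have "hopf_lax s f x - hopf_lax t f x \<le> A * (s - t)"
    using hopf_lax_le[OF s, of x yt] hopf_lax_minimizer[OF yt] quad[of "(dist x yt)\<^sup>2"]
    unfolding A_def by linarith
  moreover have "B * (s - t) \<le> hopf_lax s f x - hopf_lax t f x"
    using hopf_lax_le[OF t, of x ys] hopf_lax_minimizer[OF ys] quad[of "(dist x ys)\<^sup>2"]
    unfolding B_def by linarith
  moreover have "hopf_lax s f x - hopf_lax t f x = P * (s - t)"
    using st by (simp add: P_def)
  ultimately have bounds: "B * (s - t) \<le> P * (s - t)" "P * (s - t) \<le> A * (s - t)" by linarith+
  consider "s - t > 0" | "s - t < 0" using st by linarith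
  then have "(B \<le> P \<and> P \<le> A) \<or> (A \<le> P \<and> P \<le> B)"
    using bounds by cases (simp_all add: mult_le_cancel_right_pos mult_le_cancel_right_neg)
  then show ?thesis by linarith
qed

text \<open>At a continuity point t of D+(x,_), every choice of minimizers y_s satisfies
  d(x,y_s) \<rightarrow> D+(x,t): it is squeezed between D+(x,u(s)) and D+(x,s) with u(s) < s.\<close>
lemma minimizer_dist_tendsto:
  assumes t: "t > 0" and cont_t: "isCont (\<lambda>s. Dplus f x s) t"
    and y: "\<And>s. s > 0 \<Longrightarrow> y s \<in> hl_minimizers f s x"
  shows "((\<lambda>s. dist x (y s)) \<longlongrightarrow> Dplus f x t) (at t)"
proof -
  define u where "u = (\<lambda>s. s - \<bar>s - t\<bar>)"
  have half_t: "t / 2 > 0" using t by simp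
  have near: "eventually (\<lambda>s. 0 < u s \<and> u s < s) (at t)"
    unfolding eventually_at
  proof (intro exI[of _ "t / 2"] conjI[OF half_t] ballI impI)
    fix s :: real assume "s \<noteq> t \<and> dist s t < t / 2"
    then show "0 < u s \<and> u s < s"
      unfolding u_def dist_real_def by (auto split: abs_split)
  qed
  have "((\<lambda>s. s - \<bar>s - t\<bar>) \<longlongrightarrow> t - \<bar>t - t\<bar>) (at t)"
    by (intro tendsto_intros)
  then have "(u \<longlongrightarrow> t) (at t)" by (simp add: u_def)
  then have lower_lim: "((\<lambda>s. Dplus f x (u s)) \<longlongrightarrow> Dplus f x t) (at t)"
    by (rule isCont_tendsto_compose[OF cont_t])
  have upper_lim: "((\<lambda>s. Dplus f x s) \<longlongrightarrow> Dplus f x t) (at t)"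
    using cont_t by (simp add: isCont_def)
  have lower: "eventually (\<lambda>s. Dplus f x (u s) \<le> dist x (y s)) (at t)"
  proof (rule eventually_mono[OF near])
    fix s assume s: "0 < u s \<and> u s < s"
    then have "0 < u s" "u s < s" "0 < s" by auto
    obtain z where "z \<in> hl_minimizers f (u s) x" "dist x z = Dplus f x (u s)"
      using Dplus_attained[OF \<open>0 < u s\<close>, of x] by blast
    then show "Dplus f x (u s) \<le> dist x (y s)"
      using minimizer_dist_mono[OF \<open>0 < u s\<close> \<open>u s < s\<close> _ y[OF \<open>0 < s\<close>]] by force
  qed
  have upper: "eventually (\<lambda>s. dist x (y s) \<le> Dplus f x s) (at t)"
  proof (rule eventually_mono[OF near])
    fix s assume "0 < u s \<and> u s < s"
    then have "0 < s" by linarith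
    then show "dist x (y s) \<le> Dplus f x s" by (rule Dplus_max[OF _ y[OF \<open>0 < s\<close>]])
  qed
  show ?thesis by (rule tendsto_sandwich[OF lower upper lower_lim upper_lim])
qed

lemma hopf_lax_time_derivative:
  assumes t: "t > 0" and cont_t: "isCont (\<lambda>s. Dplus f x s) t"
  shows "((\<lambda>s. hopf_lax s f x) has_real_derivative (- (Dplus f x t)\<^sup>2 / (2 * t\<^sup>2))) (at t)"
proof -
  define y where "y s = (SOME y. y \<in> hl_minimizers f s x)" for s
  have y: "y s \<in> hl_minimizers f s x" if "s > 0" for s
    unfolding y_def using hl_minimizers_nonempty[OF that, of x] by (rule someI_ex)
  obtain yt where yt: "yt \<in> hl_minimizers f t x" "dist x yt = Dplus f x t"
    using Dplus_attained[OF t, of x] by blast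
  define L where "L = - (Dplus f x t)\<^sup>2 / (2 * t * t)"
  define P where "P = (\<lambda>s. (hopf_lax s f x - hopf_lax t f x) / (s - t))"
  define A where "A = (\<lambda>s. - (dist x yt)\<^sup>2 / (2 * s * t))"
  define d where "d = (\<lambda>s. dist x (y s))"
  define B where "B = (\<lambda>s. - (d s)\<^sup>2 / (2 * s * t))"
  have "((\<lambda>s. - (dist x yt)\<^sup>2 / (2 * s * t)) \<longlongrightarrow> - (dist x yt)\<^sup>2 / (2 * t * t)) (at t)"
    by (intro tendsto_intros) (use t in simp)
  then have lim_A: "(A \<longlongrightarrow> L) (at t)" by (simp add: A_def L_def yt(2))
  have "(d \<longlongrightarrow> Dplus f x t) (at t)"
    unfolding d_def by (rule minimizer_dist_tendsto[OF t cont_t y])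
  then have lim_B: "(B \<longlongrightarrow> L) (at t)"
    unfolding B_def L_def using t by (intro tendsto_intros) auto
  have squeeze: "eventually (\<lambda>s. min (A s) (B s) \<le> P s \<and> P s \<le> max (A s) (B s)) (at t)"
    unfolding eventually_at
  proof (intro exI[of _ t] conjI[OF t] ballI impI)
    fix s :: real assume "s \<noteq> t \<and> dist s t < t"
    then have "s > 0" "s \<noteq> t" by (auto simp: dist_real_def)
    then show "min (A s) (B s) \<le> P s \<and> P s \<le> max (A s) (B s)"
      using hopf_lax_time_quotient_bounds[OF \<open>s > 0\<close> t \<open>s \<noteq> t\<close> yt(1) y[OF \<open>s > 0\<close>]]
      by (simp add: A_def B_def P_def d_def)
  qed
  have "(P \<longlongrightarrow> L) (at t)"
  proof (rule tendsto_sandwich)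
    show "eventually (\<lambda>s. min (A s) (B s) \<le> P s) (at t)"
      using squeeze by (rule eventually_mono) simp
    show "eventually (\<lambda>s. P s \<le> max (A s) (B s)) (at t)"
      using squeeze by (rule eventually_mono) simp
    show "((\<lambda>s. min (A s) (B s)) \<longlongrightarrow> L) (at t)"
      using tendsto_min[OF lim_A lim_B] by simp
    show "((\<lambda>s. max (A s) (B s)) \<longlongrightarrow> L) (at t)"
      using tendsto_max[OF lim_A lim_B] by simp
  qed
  then have "((\<lambda>s. hopf_lax s f x) has_real_derivative L) (at t)"
    unfolding has_field_derivative_iff P_def .
  then show ?thesis by (simp add: L_def power2_eq_square mult.assoc)
qed

text \<open>Since D+(x,_) is monotone, it is continuous outside a countable set of times.\<close>
lemma hopf_lax_time_derivative_countable:
  obtains S :: "real set" where "countable S"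
    "\<And>t. t > 0 \<Longrightarrow> t \<notin> S \<Longrightarrow>
      ((\<lambda>s. hopf_lax s f x) has_real_derivative (- (Dplus f x t)\<^sup>2 / (2 * t\<^sup>2))) (at t)"
proof (rule that)
  show "countable {t \<in> {0<..}. \<not> isCont (\<lambda>s. Dplus f x s) t}"
    by (rule mono_on_ctble_discont_open[OF _ Dplus_mono]) simp
next
  fix t :: real assume "t > 0" "t \<notin> {t \<in> {0<..}. \<not> isCont (\<lambda>s. Dplus f x s) t}"
  then show "((\<lambda>s. hopf_lax s f x) has_real_derivative (- (Dplus f x t)\<^sup>2 / (2 * t\<^sup>2))) (at t)"
    by (intro hopf_lax_time_derivative) auto
qed

end

theorem mainTheorem2:
  fixes f :: "'a::metric_space \<Rightarrow> real"
  assumes "compact (UNIV :: 'a set)"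
    and "geodesic_space TYPE('a)"
    and "\<exists>L. L-lipschitz_on UNIV f"
  shows "(\<forall>x. \<forall>t>0. slope (hopf_lax t f) x = ereal (Dplus f x t / t))
       \<and> (\<forall>x. \<exists>S::real set. countable S \<and>
            (\<forall>t>0. t \<notin> S \<longrightarrow>
              (\<exists>D. ((\<lambda>s. hopf_lax s f x) has_real_derivative D) (at t) \<and>
                   ereal D + (1/2) * (slope (hopf_lax t f) x)\<^sup>2 = 0)))"
proof -
  have cont: "continuous_on UNIV f"
    using assms(3) lipschitz_on_continuous_on by blast
  have slope: "slope (hopf_lax t f) x = ereal (Dplus f x t / t)" if "t > 0" for x t
    by (rule slope_hopf_lax[OF assms(1) cont that assms(2)])
  have hamilton_jacobi:
    "ereal (- (Dplus f x t)\<^sup>2 / (2 * t\<^sup>2)) + (1/2) * (slope (hopf_lax t f) x)\<^sup>2 = 0"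
    if "t > 0" for x t
    using slope[OF that] by (simp add: power2_eq_square)
  show ?thesis
  proof (intro conjI allI)
    fix x
    obtain S :: "real set" where "countable S" and deriv: "\<And>t. t > 0 \<Longrightarrow> t \<notin> S \<Longrightarrow>
        ((\<lambda>s. hopf_lax s f x) has_real_derivative (- (Dplus f x t)\<^sup>2 / (2 * t\<^sup>2))) (at t)"
      using hopf_lax_time_derivative_countable[OF assms(1) cont, where x = x] by blast
    then show "\<exists>S::real set. countable S \<and> (\<forall>t>0. t \<notin> S \<longrightarrow>
        (\<exists>D. ((\<lambda>s. hopf_lax s f x) has_real_derivative D) (at t) \<and>
          ereal D + (1/2) * (slope (hopf_lax t f) x)\<^sup>2 = 0))"
      using hamilton_jacobi by blast
  qed (use slope in blast)
qed

end
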